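(* Consider Setting A with all nodes running Algorithm 1 (any graph sequence, any gains). Fix a sub-state $j$, a node $i\in\mathcal V\setminus\{j\}$ and a time $k$ such that $\tau^{(j)}_i[k]=m$ with $m\in\mathbb N_+$. Then there exist nodes $v(\tau)\in\mathcal V\setminus\{j\}$, $\tau\in\{k-m+1,\dots,k\}$ (with $v(k)=i$), such that $$\hat z^{(j)}_i[k]=A_{jj}^{m}\,\hat z^{(j)}_j[k-m]+\sum_{q=1}^{j-1}\sum_{\tau=k-m}^{k-1}A_{jj}^{\,k-\tau-1}A_{jq}\,\hat z^{(q)}_{v(\tau+1)}[\tau].$$
   Context: Setting A. Consider the discrete-time LTI system $x[k+1]=Ax[k]$, $k\in\mathbb N$, with $A\in\mathbb R^{n\times n}$, monitored by $N$ nodes $\mathcal V=\{1,\dots,N\}$; node $i$ measures $y_i[k]=C_ix[k]$ with $C_i\in\mathbb R^{r_i\times n}$. Let $C=[C_1^T\ \cdots\ C_N^T]^T$ and assume $(A,C)$ is observable. Fix an invertible $T$ such that $\bar A=T^{-1}AT$ is block lower-triangular with diagonal blocks $A_{11},\dots,A_{NN}$ and off-diagonal blocks $A_{jq}$ ($q<j$), zero blocks above the diagonal, and $C_iT=[C_{i1}\ \cdots\ C_{ii}\ 0\ \cdots\ 0]$ for each $i$, with $(A_{jj},C_{jj})$ observable for every $j$ (such $T$ exists). With $z[k]=T^{-1}x[k]$ partitioned compatibly into sub-states $z^{(1)}[k],\dots,z^{(N)}[k]$, one has $z^{(j)}[k+1]=A_{jj}z^{(j)}[k]+\sum_{q=1}^{j-1}A_{jq}z^{(q)}[k]$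 and $y_j[k]=\sum_{q=1}^{j}C_{jq}z^{(q)}[k]$. Node $j$ is called the source node of sub-state $j$. Communication: at each time $k$ there is a directed graph $\mathcal G[k]=(\mathcal V,\mathcal E[k])$; $(l,i)\in\mathcal E[k]$ means $l$ can send to $i$ at time $k$; $\mathcal N_i[k]=\{l\neq i:(l,i)\in\mathcal E[k]\}$. The union graph over $[k_1,k_2]$ has vertex set $\mathcal V$ and edge set $\bigcup_{\tau=k_1}^{k_2}\mathcal E[\tau]$. Algorithm 1 (run for every sub-state $j$ simultaneously). Each node $i$ keeps an estimate $\hat z^{(j)}_i[k]$ (arbitrary initial value) and a freshness index $\tau^{(j)}_i[k]\in\mathbb N\cup\{\omega\}$, where $\omega$ is a special symbol; initially $\tau^{(j)}_j[0]=0$ and $\tau^{(j)}_i[0]=\omega$ for $i\ne j$. Source node $j$: $\tau^{(j)}_j[k]=0$ for all $k$, and $\hat z^{(j)}_j[k+1]=(A_{jj}-L_jC_{jj})\hat z^{(j)}_j[k]+\sum_{q=1}^{j-1}(A_{jq}-L_jC_{jq})\hat z^{(q)}_j[k]+L_jy_j[k]$, where $L_j$ is an observer gain. Non-source node $i\neq j$ at time $k$: let $\mathcal M^{(j)}_i[k]=\{l\in\mathcal N_i[k]:\tau^{(j)}_l[k]\neq\omega\}$; if $\tau^{(j)}_i[k]=\omega$ let $\mathcal F^{(j)}_i[k]=\mathcal M^{(j)}_i[k]$, otherwise $\mathcal F^{(j)}_i[k]=\{l\in\mathcal M^{(j)}_i[k]:\tau^{(j)}_l[k]<\tau^{(j)}_i[k]\}$.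 If $\mathcal F^{(j)}_i[k]\ne\emptyset$, pick $u\in\arg\min_{l\in\mathcal F^{(j)}_i[k]}\tau^{(j)}_l[k]$ and set $\tau^{(j)}_i[k+1]=\tau^{(j)}_u[k]+1$ and $\hat z^{(j)}_i[k+1]=A_{jj}\hat z^{(j)}_u[k]+\sum_{q=1}^{j-1}A_{jq}\hat z^{(q)}_i[k]$ ("$i$ adopts the information of $u$ at time $k$"). If $\mathcal F^{(j)}_i[k]=\emptyset$, set $\tau^{(j)}_i[k+1]=\omega$ if $\tau^{(j)}_i[k]=\omega$ and $\tau^{(j)}_i[k+1]=\tau^{(j)}_i[k]+1$ otherwise, and $\hat z^{(j)}_i[k+1]=A_{jj}\hat z^{(j)}_i[k]+\sum_{q=1}^{j-1}A_{jq}\hat z^{(q)}_i[k]$ ("$i$ adopts its own information"). *)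

theory Defs
  imports "Jordan_Normal_Form.Matrix"
begin

(* Conventions:
   nodes and sub-states are 1..N;
   Ab j q  : block A_{jq} (d j x d q),   Cb j q : block C_{jq} (r j x d q),
   L j     : observer gain L_j (d j x r j);
   tau j i k : freshness index tau^{(j)}_i[k], None encodes the symbol omega;
   zh j i k  : estimate zhat^{(j)}_i[k];
   G k       : edge set E[k], (l,i) \<in> G k means l can send to i at time k. *)

definition vsum :: "nat \<Rightarrow> ('c \<Rightarrow> real vec) \<Rightarrow> 'c set \<Rightarrow> real vec" where
  "vsum n f S = finsum_vec TYPE(real) n f S"

definition nbrs :: "nat \<Rightarrow> (nat \<Rightarrow> (nat \<times> nat) set) \<Rightarrow> nat \<Rightarrow> nat \<Rightarrow> nat set" where
  "nbrs N G i k = {l \<in> {1..N}. l \<noteq> i \<and> (l, i) \<in> G k}"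

definition Mset :: "nat \<Rightarrow> (nat \<Rightarrow> (nat \<times> nat) set) \<Rightarrow> (nat \<Rightarrow> nat \<Rightarrow> nat \<Rightarrow> nat option)
                    \<Rightarrow> nat \<Rightarrow> nat \<Rightarrow> nat \<Rightarrow> nat set" where
  "Mset N G tau j i k = {l \<in> nbrs N G i k. tau j l k \<noteq> None}"

definition Fset :: "nat \<Rightarrow> (nat \<Rightarrow> (nat \<times> nat) set) \<Rightarrow> (nat \<Rightarrow> nat \<Rightarrow> nat \<Rightarrow> nat option)
                    \<Rightarrow> nat \<Rightarrow> nat \<Rightarrow> nat \<Rightarrow> nat set" where
  "Fset N G tau j i k =
     (if tau j i k = None then Mset N G tau j i k
      else {l \<in> Mset N G tau j i k. the (tau j l k) < the (tau j i k)})"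

definition coupling :: "(nat \<Rightarrow> nat) \<Rightarrow> (nat \<Rightarrow> nat \<Rightarrow> real mat)
                        \<Rightarrow> (nat \<Rightarrow> nat \<Rightarrow> nat \<Rightarrow> real vec) \<Rightarrow> nat \<Rightarrow> nat \<Rightarrow> nat \<Rightarrow> real vec" where
  "coupling d Ab zh j i k = vsum (d j) (\<lambda>q. Ab j q *\<^sub>v zh q i k) {1..<j}"

(* Algorithm 1, run for every sub-state j simultaneously, on the graph sequence G,
   with measurements y. The arg-min choice is arbitrary (any tie-breaking). *)
definition algorithm1 ::
  "nat \<Rightarrow> (nat \<Rightarrow> nat) \<Rightarrow> (nat \<Rightarrow> nat \<Rightarrow> real mat) \<Rightarrow> (nat \<Rightarrow> nat \<Rightarrow> real mat) \<Rightarrow> (nat \<Rightarrow> real mat)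
   \<Rightarrow> (nat \<Rightarrow> nat \<Rightarrow> real vec) \<Rightarrow> (nat \<Rightarrow> (nat \<times> nat) set)
   \<Rightarrow> (nat \<Rightarrow> nat \<Rightarrow> nat \<Rightarrow> nat option) \<Rightarrow> (nat \<Rightarrow> nat \<Rightarrow> nat \<Rightarrow> real vec) \<Rightarrow> bool" where
  "algorithm1 N d Ab Cb L y G tau zh \<longleftrightarrow>
     (\<forall>j\<in>{1..N}. \<forall>i\<in>{1..N}. zh j i 0 \<in> carrier_vec (d j)) \<and>
     (\<forall>j\<in>{1..N}. \<forall>i\<in>{1..N}. i \<noteq> j \<longrightarrow> tau j i 0 = None) \<and>
     (\<forall>j\<in>{1..N}. \<forall>k. tau j j k = Some 0 \<and>
        zh j j (Suc k) = (Ab j j - L j * Cb j j) *\<^sub>v zh j j k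
                         + vsum (d j) (\<lambda>q. (Ab j q - L j * Cb j q) *\<^sub>v zh q j k) {1..<j}
                         + L j *\<^sub>v y j k) \<and>
     (\<forall>j\<in>{1..N}. \<forall>i\<in>{1..N}. i \<noteq> j \<longrightarrow> (\<forall>k.
        (Fset N G tau j i k \<noteq> {} \<longrightarrow>
           (\<exists>u\<in>Fset N G tau j i k.
              (\<forall>l\<in>Fset N G tau j i k. the (tau j u k) \<le> the (tau j l k)) \<and>
              tau j i (Suc k) = Some (Suc (the (tau j u k))) \<and>
              zh j i (Suc k) = Ab j j *\<^sub>v zh j u k + coupling d Ab zh j i k)) \<and>
        (Fset N G tau j i k = {} \<longrightarrow>
           tau j i (Suc k) = map_option Suc (tau j i k) \<and>
           zh j i (Suc k) = Ab j j *\<^sub>v zh j i k + coupling d Ab zh j i k)))"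

end

theory Submission imports Defs begin

text \<open>Follow the chain of adoptions backwards from node i at time k. Each step of a
non-source node multiplies the estimate it builds on by A_jj and adds its own coupling term;
the freshness index drops by exactly one per step and is 0 only at the source node j, so after
m steps the chain reaches j at time k - m.\<close>

lemma vsum_closed: "f \<in> S \<rightarrow> carrier_vec n \<Longrightarrow> vsum n f S \<in> carrier_vec n"
  unfolding vsum_def by (rule finsum_vec_closed)

lemma vsum_empty: "vsum n f {} = 0\<^sub>v n"
  unfolding vsum_def by (rule finsum_vec_empty)

lemma vsum_zero: "vsum n (\<lambda>x. 0\<^sub>v n) S = 0\<^sub>v n"
  unfolding vsum_def
  by (rule comm_monoid.finprod_one[OF comm_monoid_vec,
        folded finsum_vec_def, unfolded monoid_vec_simps])

lemma vsum_insert: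
  "finite S \<Longrightarrow> a \<notin> S \<Longrightarrow> f a \<in> carrier_vec n \<Longrightarrow> f \<in> S \<rightarrow> carrier_vec n \<Longrightarrow>
   vsum n f (insert a S) = f a + vsum n f S"
  unfolding vsum_def by (rule finsum_vec_insert)

lemma vsum_add:
  "f \<in> S \<rightarrow> carrier_vec n \<Longrightarrow> g \<in> S \<rightarrow> carrier_vec n \<Longrightarrow>
   vsum n (\<lambda>x. f x + g x) S = vsum n f S + vsum n g S"
  unfolding vsum_def
  by (rule comm_monoid.finprod_multf[OF comm_monoid_vec,
        folded finsum_vec_def, unfolded monoid_vec_simps])

lemma vsum_cong:
  "S = T \<Longrightarrow> g \<in> T \<rightarrow> carrier_vec n \<Longrightarrow> (\<And>x. x \<in> T \<Longrightarrow> f x = g x) \<Longrightarrow>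
   vsum n f S = vsum n g T"
  unfolding vsum_def
  by (rule comm_monoid.finprod_cong'[OF comm_monoid_vec,
        folded finsum_vec_def, unfolded monoid_vec_simps]) auto

lemma add_carrier_vec_right: "b \<in> carrier_vec n \<Longrightarrow> a + b \<in> carrier_vec n"
  by (rule carrier_vecI) (simp add: carrier_vecD)

lemma mult_mat_vec_carrier: "A \<in> carrier_mat n p \<Longrightarrow> A *\<^sub>v v \<in> carrier_vec n"
  by (simp add: carrier_vecI carrier_matD(1))

lemma pow_mult_mat_vec_carrier: "A \<in> carrier_mat n n \<Longrightarrow> (A ^\<^sub>m e * B) *\<^sub>v v \<in> carrier_vec n"
  by (simp add: carrier_vecI carrier_matD(1))

lemma mult_mat_vec_zero: "A \<in> carrier_mat n p \<Longrightarrow> A *\<^sub>v 0\<^sub>v p = 0\<^sub>v n"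
  by (rule eq_vecI) (auto simp: scalar_prod_def)

lemma mult_mat_vec_vsum:
  assumes A: "A \<in> carrier_mat n p" and "finite S" and "f \<in> S \<rightarrow> carrier_vec p"
  shows "A *\<^sub>v vsum p f S = vsum n (\<lambda>x. A *\<^sub>v f x) S"
  using assms(2,3)
proof (induction S rule: finite_induct)
  case empty
  show ?case using mult_mat_vec_zero[OF A] by (simp add: vsum_empty)
next
  case (insert a S)
  then have fS: "f \<in> S \<rightarrow> carrier_vec p" and fa: "f a \<in> carrier_vec p" by auto
  have "A *\<^sub>v vsum p f (insert a S) = A *\<^sub>v f a + A *\<^sub>v vsum p f S"
    using vsum_insert[OF insert(1,2) fa fS] mult_add_distrib_mat_vec[OF A fa vsum_closed[OF fS]]
    by simp
  also have "\<dots> = vsum n (\<lambda>x. A *\<^sub>v f x) (insert a S)"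
    using insert fS A by (simp add: vsum_insert Pi_def mult_mat_vec_carrier)
  finally show ?case .
qed

lemma pow_mat_Suc_left:
  assumes A: "A \<in> carrier_mat n n"
  shows "A ^\<^sub>m Suc p = A * A ^\<^sub>m p"
proof (induction p)
  case (Suc p)
  have "A ^\<^sub>m Suc (Suc p) = A * A ^\<^sub>m p * A" using Suc by simp
  also have "\<dots> = A * (A ^\<^sub>m p * A)" using A by (intro assoc_mult_mat) auto
  finally show ?case by simp
qed (use A in auto)

lemma mult_mat_vec_pow_Suc:
  assumes "A \<in> carrier_mat n n" and "x \<in> carrier_vec n"
  shows "A *\<^sub>v (A ^\<^sub>m p *\<^sub>v x) = A ^\<^sub>m Suc p *\<^sub>v x"
  unfolding pow_mat_Suc_left[OF assms(1)]
  by (rule assoc_mult_mat_vec[symmetric, OF assms(1) pow_carrier_mat[OF assms(1)] assms(2)])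

lemma delayed_sum_Suc:
  assumes A: "A \<in> carrier_mat n n" and B: "B \<in> carrier_mat n p"
    and xs: "\<And>t. t \<in> {k - m..<k} \<Longrightarrow> xs t \<in> carrier_vec p" and "m \<le> k"
  shows "vsum n (\<lambda>t. (A ^\<^sub>m (Suc k - t - 1) * B) *\<^sub>v xs t) {Suc k - Suc m..<Suc k}
       = B *\<^sub>v xs k + A *\<^sub>v vsum n (\<lambda>t. (A ^\<^sub>m (k - t - 1) * B) *\<^sub>v xs t) {k - m..<k}"
proof -
  let ?T = "{k - m..<k}"
  have AB: "A ^\<^sub>m e * B \<in> carrier_mat n p" for e
    by (rule mult_carrier_mat[OF pow_carrier_mat[OF A] B])
  have window: "{Suc k - Suc m..<Suc k} = insert k ?T" using \<open>m \<le> k\<close> by auto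
  have shift: "(A ^\<^sub>m (Suc k - t - 1) * B) *\<^sub>v xs t = A *\<^sub>v ((A ^\<^sub>m (k - t - 1) * B) *\<^sub>v xs t)"
    if t: "t \<in> ?T" for t
  proof -
    have "Suc k - t - 1 = Suc (k - t - 1)" using t by auto
    then have "(A ^\<^sub>m (Suc k - t - 1) * B) *\<^sub>v xs t = (A * A ^\<^sub>m (k - t - 1) * B) *\<^sub>v xs t"
      by (simp only: pow_mat_Suc_left[OF A])
    also have "\<dots> = (A * (A ^\<^sub>m (k - t - 1) * B)) *\<^sub>v xs t"
      by (simp only: assoc_mult_mat[OF A pow_carrier_mat[OF A] B])
    also have "\<dots> = A *\<^sub>v ((A ^\<^sub>m (k - t - 1) * B) *\<^sub>v xs t)"
      by (rule assoc_mult_mat_vec[OF A AB xs[OF t]])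
    finally show ?thesis .
  qed
  have "vsum n (\<lambda>t. (A ^\<^sub>m (Suc k - t - 1) * B) *\<^sub>v xs t) (insert k ?T)
      = (A ^\<^sub>m (Suc k - k - 1) * B) *\<^sub>v xs k
        + vsum n (\<lambda>t. (A ^\<^sub>m (Suc k - t - 1) * B) *\<^sub>v xs t) ?T"
    by (rule vsum_insert) (auto intro: mult_mat_vec_carrier[OF AB] simp del: pow_mat.simps)
  also have "vsum n (\<lambda>t. (A ^\<^sub>m (Suc k - t - 1) * B) *\<^sub>v xs t) ?T
           = vsum n (\<lambda>t. A *\<^sub>v ((A ^\<^sub>m (k - t - 1) * B) *\<^sub>v xs t)) ?T"
    by (rule vsum_cong[OF refl _ shift]) (simp_all add: Pi_def mult_mat_vec_carrier[OF A])
  also have "\<dots> = A *\<^sub>v vsum n (\<lambda>t. (A ^\<^sub>m (k - t - 1) * B) *\<^sub>v xs t) ?T"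
    by (rule mult_mat_vec_vsum[symmetric, OF A]) (simp_all add: Pi_def mult_mat_vec_carrier[OF AB])
  finally show ?thesis unfolding window using A B by simp
qed

text \<open>The double sum of the formula: v(t + 1) is the node that holds the information about
  sub-state j after step t of the chain.\<close>

definition relayed_coupling ::
  "(nat \<Rightarrow> nat) \<Rightarrow> (nat \<Rightarrow> nat \<Rightarrow> real mat) \<Rightarrow> (nat \<Rightarrow> nat \<Rightarrow> nat \<Rightarrow> real vec)
   \<Rightarrow> nat \<Rightarrow> (nat \<Rightarrow> nat) \<Rightarrow> nat \<Rightarrow> nat \<Rightarrow> real vec" where
  "relayed_coupling d Ab zh j v k m =
     vsum (d j) (\<lambda>q. vsum (d j)
       (\<lambda>t. (Ab j j ^\<^sub>m (k - t - 1) * Ab j q) *\<^sub>v zh q (v (t + 1)) t) {k - m..<k}) {1..<j}"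

lemma relayed_coupling_0: "relayed_coupling d Ab zh j v k 0 = 0\<^sub>v (d j)"
  unfolding relayed_coupling_def by (simp add: vsum_empty vsum_zero)

lemma relayed_coupling_carrier:
  assumes "Ab j j \<in> carrier_mat (d j) (d j)"
  shows "relayed_coupling d Ab zh j v k m \<in> carrier_vec (d j)"
  unfolding relayed_coupling_def
  by (intro vsum_closed Pi_I pow_mult_mat_vec_carrier[OF assms])

lemma coupling_carrier:
  assumes "\<And>q. q \<in> {1..<j} \<Longrightarrow> Ab j q \<in> carrier_mat (d j) (d q)"
  shows "coupling d Ab zh j i k \<in> carrier_vec (d j)"
  unfolding coupling_def by (rule vsum_closed, rule Pi_I, rule mult_mat_vec_carrier, rule assms)

lemma relayed_coupling_Suc:
  assumes A: "Ab j j \<in> carrier_mat (d j) (d j)"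
    and B: "\<And>q. q \<in> {1..<j} \<Longrightarrow> Ab j q \<in> carrier_mat (d j) (d q)"
    and zh: "\<And>q t. q \<in> {1..<j} \<Longrightarrow> t \<in> {k - m..<k} \<Longrightarrow> zh q (v (t + 1)) t \<in> carrier_vec (d q)"
    and "m \<le> k"
  shows "relayed_coupling d Ab zh j (v(Suc k := i)) (Suc k) (Suc m)
       = coupling d Ab zh j i k + Ab j j *\<^sub>v relayed_coupling d Ab zh j v k m"
proof -
  define W where "W q = vsum (d j)
    (\<lambda>t. (Ab j j ^\<^sub>m (k - t - 1) * Ab j q) *\<^sub>v zh q (v (t + 1)) t) {k - m..<k}" for q
  have W: "W q \<in> carrier_vec (d j)" if "q \<in> {1..<j}" for q
    unfolding W_def by (intro vsum_closed Pi_I pow_mult_mat_vec_carrier[OF A])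
  have new_window: "vsum (d j) (\<lambda>t. (Ab j j ^\<^sub>m (Suc k - t - 1) * Ab j q) *\<^sub>v
                      zh q ((v(Suc k := i)) (t + 1)) t) {Suc k - Suc m..<Suc k}
                  = Ab j q *\<^sub>v zh q i k + Ab j j *\<^sub>v W q" if q: "q \<in> {1..<j}" for q
  proof -
    have old: "zh q ((v(Suc k := i)) (t + 1)) t = zh q (v (t + 1)) t" if "t \<in> {k - m..<k}" for t
      using that by simp
    have "vsum (d j) (\<lambda>t. (Ab j j ^\<^sub>m (k - t - 1) * Ab j q) *\<^sub>v
            zh q ((v(Suc k := i)) (t + 1)) t) {k - m..<k} = W q"
      unfolding W_def by (intro vsum_cong Pi_I pow_mult_mat_vec_carrier[OF A]) (simp_all add: old)
    then show ?thesis
      using delayed_sum_Suc[OF A B[OF q], of k m "\<lambda>t. zh q ((v(Suc k := i)) (t + 1)) t"]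
        zh[OF q] \<open>m \<le> k\<close> by simp
  qed
  have "relayed_coupling d Ab zh j (v(Suc k := i)) (Suc k) (Suc m)
      = vsum (d j) (\<lambda>q. Ab j q *\<^sub>v zh q i k + Ab j j *\<^sub>v W q) {1..<j}"
    unfolding relayed_coupling_def
    by (rule vsum_cong[OF refl _ new_window])
      (intro Pi_I add_carrier_vec mult_mat_vec_carrier[OF A] mult_mat_vec_carrier[OF B])
  also have "\<dots> = coupling d Ab zh j i k + vsum (d j) (\<lambda>q. Ab j j *\<^sub>v W q) {1..<j}"
    unfolding coupling_def
    by (intro vsum_add Pi_I mult_mat_vec_carrier[OF A] mult_mat_vec_carrier[OF B]) auto
  also have "vsum (d j) (\<lambda>q. Ab j j *\<^sub>v W q) {1..<j} = Ab j j *\<^sub>v relayed_coupling d Ab zh j v k m"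
    unfolding relayed_coupling_def W_def[symmetric]
    using W by (intro mult_mat_vec_vsum[symmetric, OF A]) auto
  finally show ?thesis .
qed

lemma relayed_estimate_Suc:
  assumes A: "Ab j j \<in> carrier_mat (d j) (d j)"
    and B: "\<And>q. q \<in> {1..<j} \<Longrightarrow> Ab j q \<in> carrier_mat (d j) (d q)"
    and zh: "\<And>q t. q \<in> {1..<j} \<Longrightarrow> t \<in> {k - m..<k} \<Longrightarrow> zh q (v (t + 1)) t \<in> carrier_vec (d q)"
    and "m \<le> k" and x: "x \<in> carrier_vec (d j)"
  shows "Ab j j *\<^sub>v (Ab j j ^\<^sub>m m *\<^sub>v x + relayed_coupling d Ab zh j v k m) + coupling d Ab zh j i k
       = Ab j j ^\<^sub>m Suc m *\<^sub>v x + relayed_coupling d Ab zh j (v(Suc k := i)) (Suc k) (Suc m)"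
proof -
  let ?R = "relayed_coupling d Ab zh j v k m"
  have R: "?R \<in> carrier_vec (d j)" by (rule relayed_coupling_carrier) (rule A)
  have C: "coupling d Ab zh j i k \<in> carrier_vec (d j)" by (rule coupling_carrier) (rule B)
  have "Ab j j *\<^sub>v (Ab j j ^\<^sub>m m *\<^sub>v x + ?R) = Ab j j ^\<^sub>m Suc m *\<^sub>v x + Ab j j *\<^sub>v ?R"
    using mult_add_distrib_mat_vec[OF A mult_mat_vec_carrier[OF pow_carrier_mat[OF A]] R]
    by (simp add: mult_mat_vec_pow_Suc[OF A x])
  then show ?thesis
    using relayed_coupling_Suc[where Ab = Ab and j = j and d = d and zh = zh and k = k and m = m
          and v = v and i = i, OF A B zh \<open>m \<le> k\<close>] C mult_mat_vec_carrier[OF A, of ?R]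
      mult_mat_vec_carrier[OF pow_carrier_mat[OF A], of "Suc m" x]
    by (simp add: comm_add_vec)
qed

lemma Fset_memD: "u \<in> Fset N G tau j i k \<Longrightarrow> u \<in> {1..N} \<and> tau j u k \<noteq> None"
  unfolding Fset_def Mset_def nbrs_def by (auto split: if_splits)

locale algorithm1_run =
  fixes N :: nat and d :: "nat \<Rightarrow> nat"
    and Ab Cb :: "nat \<Rightarrow> nat \<Rightarrow> real mat" and L :: "nat \<Rightarrow> real mat"
    and y :: "nat \<Rightarrow> nat \<Rightarrow> real vec" and G :: "nat \<Rightarrow> (nat \<times> nat) set"
    and tau :: "nat \<Rightarrow> nat \<Rightarrow> nat \<Rightarrow> nat option" and zh :: "nat \<Rightarrow> nat \<Rightarrow> nat \<Rightarrow> real vec"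
  assumes Ab_dim: "\<And>p q. p \<in> {1..N} \<Longrightarrow> q \<in> {1..p} \<Longrightarrow> Ab p q \<in> carrier_mat (d p) (d q)"
    and L_dim: "\<And>p. p \<in> {1..N} \<Longrightarrow> dim_row (L p) = d p"
    and alg: "algorithm1 N d Ab Cb L y G tau zh"
begin

lemma Ab_diag_dim: "j \<in> {1..N} \<Longrightarrow> Ab j j \<in> carrier_mat (d j) (d j)"
  by (rule Ab_dim) auto

lemma Ab_below_dim: "j \<in> {1..N} \<Longrightarrow> q \<in> {1..<j} \<Longrightarrow> Ab j q \<in> carrier_mat (d j) (d q)"
  by (rule Ab_dim) auto

lemma estimate_init: "j \<in> {1..N} \<Longrightarrow> i \<in> {1..N} \<Longrightarrow> zh j i 0 \<in> carrier_vec (d j)"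
  using alg[unfolded algorithm1_def, THEN conjunct1] by blast

lemma tau_init: "j \<in> {1..N} \<Longrightarrow> i \<in> {1..N} \<Longrightarrow> i \<noteq> j \<Longrightarrow> tau j i 0 = None"
  using alg[unfolded algorithm1_def, THEN conjunct2, THEN conjunct1] by blast

lemma source_step:
  assumes "j \<in> {1..N}"
  shows "tau j j k = Some 0"
    and "zh j j (Suc k) = (Ab j j - L j * Cb j j) *\<^sub>v zh j j k
           + vsum (d j) (\<lambda>q. (Ab j q - L j * Cb j q) *\<^sub>v zh q j k) {1..<j} + L j *\<^sub>v y j k"
  using alg[unfolded algorithm1_def, THEN conjunct2, THEN conjunct2, THEN conjunct1, rule_format,
      OF assms, of k] by auto

lemma nonsource_step:
  assumes "j \<in> {1..N}" "i \<in> {1..N}" "i \<noteq> j"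
  obtains (adopt) u where "u \<in> Fset N G tau j i k"
      "tau j i (Suc k) = Some (Suc (the (tau j u k)))"
      "zh j i (Suc k) = Ab j j *\<^sub>v zh j u k + coupling d Ab zh j i k"
  | (own) "tau j i (Suc k) = map_option Suc (tau j i k)"
      "zh j i (Suc k) = Ab j j *\<^sub>v zh j i k + coupling d Ab zh j i k"
proof -
  note step = alg[unfolded algorithm1_def, THEN conjunct2, THEN conjunct2, THEN conjunct2,
      rule_format, OF assms, of k]
  show thesis
  proof (cases "Fset N G tau j i k = {}")
    case True
    then show thesis using step own by simp
  next
    case False
    then show thesis using step adopt by blast
  qed
qed

lemma estimate_carrier:
  assumes j: "j \<in> {1..N}" and i: "i \<in> {1..N}"
  shows "zh j i k \<in> carrier_vec (d j)"
proof (cases k)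
  case 0
  then show ?thesis using estimate_init[OF j i] by simp
next
  case (Suc k')
  have C: "coupling d Ab zh j i k' \<in> carrier_vec (d j)"
    by (rule coupling_carrier) (rule Ab_below_dim[OF j])
  show ?thesis
  proof (cases "i = j")
    case True
    note source_step(2)[OF j, of k']
    moreover have "L j *\<^sub>v y j k' \<in> carrier_vec (d j)" by (rule carrier_vecI) (simp add: L_dim[OF j])
    ultimately show ?thesis using True Suc by (simp add: add_carrier_vec_right)
  next
    case False
    show ?thesis using C Suc
      by (cases rule: nonsource_step[OF j i False, of k'])
        (simp_all add: add_carrier_vec_right)
  qed
qed

lemma freshness_bounds:
  assumes "j \<in> {1..N}" "i \<in> {1..N}" "i \<noteq> j" "tau j i k = Some m"
  shows "0 < m \<and> m \<le> k"
  using assms(2-4)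
proof (induction k arbitrary: i m)
  case 0
  then show ?case using tau_init[OF assms(1)] by simp
next
  case (Suc k)
  show ?case
  proof (cases rule: nonsource_step[OF assms(1) Suc.prems(1,2), of k, case_names adopt own])
    case (adopt u)
    then obtain mu where mu: "tau j u k = Some mu" "m = Suc mu"
      using Fset_memD[OF adopt(1)] Suc.prems(3) by auto
    have "mu \<le> k"
    proof (cases "u = j")
      case True
      then show ?thesis using mu source_step(1)[OF assms(1)] by simp
    next
      case False
      then show ?thesis using Suc.IH[OF _ False mu(1)] Fset_memD[OF adopt(1)] by simp
    qed
    then show ?thesis using mu by simp
  next
    case own
    then obtain m' where "tau j i k = Some m'" "m = Suc m'"
      using Suc.prems(3) by (cases "tau j i k") auto
    then show ?thesis using Suc.IH[OF Suc.prems(1,2)] by auto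
  qed
qed

text \<open>Whichever branch node i takes, it builds its estimate on a node w whose freshness index
  was one smaller; in the own-information branch w = i.\<close>

lemma adopted_estimate:
  assumes j: "j \<in> {1..N}" and i: "i \<in> {1..N}" "i \<noteq> j"
    and tau: "tau j i (Suc k) = Some (Suc m)"
  obtains w where "w \<in> {1..N}" "tau j w k = Some m"
    "zh j i (Suc k) = Ab j j *\<^sub>v zh j w k + coupling d Ab zh j i k"
proof (cases rule: nonsource_step[OF j i, of k, case_names adopt own])
  case (adopt u)
  then show ?thesis using that Fset_memD[OF adopt(1)] tau by auto
next
  case own
  then show ?thesis using that[of i] i(1) tau by (cases "tau j i k") auto
qed

lemma relayed_estimate:
  assumes j: "j \<in> {1..N}" and "w \<in> {1..N}" and "tau j w k = Some m"
  shows "\<exists>v. v k = w \<and> (\<forall>t\<in>{k - m + 1..k}. v t \<in> {1..N} - {j}) \<and>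
    zh j w k = Ab j j ^\<^sub>m m *\<^sub>v zh j j (k - m) + relayed_coupling d Ab zh j v k m"
  using assms(2,3)
proof (induction m arbitrary: w k)
  case 0
  then have "w = j" using freshness_bounds[OF j] by blast
  then show ?case using estimate_carrier[OF j j, of k] Ab_diag_dim[OF j]
    by (intro exI[of _ "\<lambda>_. j"]) (simp add: relayed_coupling_0)
next
  case (Suc m)
  have "w \<noteq> j" using Suc.prems(2) source_step(1)[OF j] by auto
  then obtain k' where k: "k = Suc k'" and "m \<le> k'"
    using freshness_bounds[OF j Suc.prems(1) \<open>w \<noteq> j\<close> Suc.prems(2)] by (cases k) auto
  obtain w' where w': "w' \<in> {1..N}" "tau j w' k' = Some m"
    and zh_w: "zh j w k = Ab j j *\<^sub>v zh j w' k' + coupling d Ab zh j w k'"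
    using adopted_estimate[OF j Suc.prems(1) \<open>w \<noteq> j\<close>] Suc.prems(2) k by blast
  obtain v where v: "v k' = w'" "\<forall>t\<in>{k' - m + 1..k'}. v t \<in> {1..N} - {j}"
    and zh_w': "zh j w' k' = Ab j j ^\<^sub>m m *\<^sub>v zh j j (k' - m) + relayed_coupling d Ab zh j v k' m"
    using Suc.IH[OF w'] by blast
  have zh_dim: "zh q (v (t + 1)) t \<in> carrier_vec (d q)" if "q \<in> {1..<j}" "t \<in> {k' - m..<k'}" for q t
    using that v(2) j by (intro estimate_carrier) auto
  have "zh j w k = Ab j j *\<^sub>v (Ab j j ^\<^sub>m m *\<^sub>v zh j j (k' - m) + relayed_coupling d Ab zh j v k' m)
      + coupling d Ab zh j w k'"
    using zh_w zh_w' by simp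
  also have "\<dots> = Ab j j ^\<^sub>m Suc m *\<^sub>v zh j j (k' - m)
      + relayed_coupling d Ab zh j (v(Suc k' := w)) (Suc k') (Suc m)"
    by (rule relayed_estimate_Suc[where Ab = Ab and j = j and d = d and zh = zh,
          OF Ab_diag_dim[OF j] Ab_below_dim[OF j] zh_dim \<open>m \<le> k'\<close> estimate_carrier[OF j j]])
  finally have "zh j w k = Ab j j ^\<^sub>m Suc m *\<^sub>v zh j j (k - Suc m)
      + relayed_coupling d Ab zh j (v(k := w)) k (Suc m)"
    using k by simp
  moreover have "\<forall>t\<in>{k - Suc m + 1..k}. (v(k := w)) t \<in> {1..N} - {j}"
    using v(2) Suc.prems(1) \<open>w \<noteq> j\<close> \<open>m \<le> k'\<close> k by auto
  ultimately show ?case by (intro exI[of _ "v(k := w)"]) (simp only: fun_upd_same simp_thms)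
qed

end

theorem lemma3:
  fixes N :: nat and d r :: "nat \<Rightarrow> nat"
    and Ab Cb :: "nat \<Rightarrow> nat \<Rightarrow> real mat" and L :: "nat \<Rightarrow> real mat"
    and z :: "nat \<Rightarrow> nat \<Rightarrow> real vec" and y :: "nat \<Rightarrow> nat \<Rightarrow> real vec"
    and G :: "nat \<Rightarrow> (nat \<times> nat) set"
    and tau :: "nat \<Rightarrow> nat \<Rightarrow> nat \<Rightarrow> nat option"
    and zh :: "nat \<Rightarrow> nat \<Rightarrow> nat \<Rightarrow> real vec"
    and j i k m :: nat
  assumes Ab_dim: "\<And>p q. p \<in> {1..N} \<Longrightarrow> q \<in> {1..p} \<Longrightarrow> Ab p q \<in> carrier_mat (d p) (d q)"
    and Cb_dim: "\<And>p q. p \<in> {1..N} \<Longrightarrow> q \<in> {1..p} \<Longrightarrow> Cb p q \<in> carrier_mat (r p) (d q)"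
    and L_dim: "\<And>p. p \<in> {1..N} \<Longrightarrow> L p \<in> carrier_mat (d p) (r p)"
    and z_dim: "\<And>p. p \<in> {1..N} \<Longrightarrow> z p 0 \<in> carrier_vec (d p)"
    and z_dyn: "\<And>p t. p \<in> {1..N} \<Longrightarrow>
                  z p (Suc t) = Ab p p *\<^sub>v z p t + vsum (d p) (\<lambda>q. Ab p q *\<^sub>v z q t) {1..<p}"
    and y_def: "\<And>p t. p \<in> {1..N} \<Longrightarrow> y p t = vsum (r p) (\<lambda>q. Cb p q *\<^sub>v z q t) {1..p}"
    and alg: "algorithm1 N d Ab Cb L y G tau zh"
    and j: "j \<in> {1..N}" and i: "i \<in> {1..N}" and ij: "i \<noteq> j"
    and tau_ik: "tau j i k = Some m" and m_pos: "m > 0"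
  shows "\<exists>v :: nat \<Rightarrow> nat.
           v k = i \<and> (\<forall>t\<in>{k - m + 1..k}. v t \<in> {1..N} - {j}) \<and>
           zh j i k = (Ab j j ^\<^sub>m m) *\<^sub>v zh j j (k - m)
             + vsum (d j) (\<lambda>q. vsum (d j)
                  (\<lambda>t. (Ab j j ^\<^sub>m (k - t - 1) * Ab j q) *\<^sub>v zh q (v (t + 1)) t) {k - m..<k})
                 {1..<j}"
proof -
  interpret algorithm1_run N d Ab Cb L y G tau zh
    by unfold_locales (auto intro: Ab_dim alg carrier_matD(1)[OF L_dim])
  show ?thesis
    using relayed_estimate[OF j i tau_ik] unfolding relayed_coupling_def .
qed

end
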